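(* Let $(M,d)$ be a metric space, $\mathsf{P}\subseteq M$ a set of $n$ points, and $1\le \ell\le k\le n$ integers; put $m=\lfloor k/\ell\rfloor$. Let $c\ge 1$ and let $Q=\{q_1,\dots,q_m\}\subseteq \mathsf{P}$ be a set of $m$ points that is a $c$-approximate solution to the (non-fault-tolerant) $m$-median problem on $\mathsf{P}$, i.e. $\sum_{p\in\mathsf{P}} d_Q(p,1)\le c\cdot \sigma_{\mathrm{med}}$, where $\sigma_{\mathrm{med}}=\min_{S\subseteq\mathsf{P},|S|=m}\sum_{p\in\mathsf{P}} d_S(p,1)$. Let $C\subseteq\mathsf{P}$ be any set with $|C|=k$ and $C\supseteq \bigcup_{i=1}^m N_{\mathsf{P}}(q_i,\ell)$. Then $$\sum_{p\in\mathsf{P}} d_C(p,\ell)\;\le\;(1+4c)\,\sigma_{\mathrm{opt}},\qquad\text{where } \sigma_{\mathrm{opt}}=\min_{C'\subseteq\mathsf{P},\,|C'|=k}\ \sum_{p\in\mathsf{P}} d_{C'}(p,\ell).$$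
   Context: For a finite set $S\subseteq M$, a point $p\in M$ and an integer $1\le i\le |S|$, $d_S(p,i)$ denotes the radius of the smallest closed ball centered at $p$ containing at least $i$ points of $S$ (the distance from $p$ to its $i$-th nearest neighbor in $S$). The $i$ nearest neighbors of $p$ in $S$ are determined by ordering the points $s\in S$ lexicographically by the pair $(d(p,s),\text{index of } s)$ (points of $\mathsf{P}=\{p_1,\dots,p_n\}$ are indexed), so they are unique; $N_S(p,i)$ denotes the set of the first $i$ points in this order, so $|N_S(p,i)|=i$. The fault-tolerant $k$-median cost of $C$ is $\sum_{p\in\mathsf{P}} d_C(p,\ell)$; the case $\ell=1$ is ordinary $k$-median. *)

theory Defs
  imports Complex_Main
begin

definition kdist :: "'a::metric_space set \<Rightarrow> 'a \<Rightarrow> nat \<Rightarrow> real" where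
  "kdist S p i = Inf {r. 0 \<le> r \<and> card {s \<in> S. dist p s \<le> r} \<ge> i}"

definition nn_before :: "('a \<Rightarrow> nat) \<Rightarrow> 'a::metric_space \<Rightarrow> 'a \<Rightarrow> 'a \<Rightarrow> bool" where
  "nn_before ix p t s \<longleftrightarrow> dist p t < dist p s \<or> (dist p t = dist p s \<and> ix t < ix s)"

definition nnset :: "('a \<Rightarrow> nat) \<Rightarrow> 'a::metric_space set \<Rightarrow> 'a \<Rightarrow> nat \<Rightarrow> 'a set" where
  "nnset ix S p i = {s \<in> S. card {t \<in> S. nn_before ix p t s} < i}"

definition ftcost :: "'a::metric_space set \<Rightarrow> 'a set \<Rightarrow> nat \<Rightarrow> real" where
  "ftcost P C l = (\<Sum>p\<in>P. kdist C p l)"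

end

theory Submission
  imports Defs "HOL-Library.Disjoint_Sets"
begin

text \<open>Let \<open>C*\<close> be an optimal fault-tolerant solution, \<open>r p = d_C*(p,l)\<close> and \<open>B p\<close> the points of
  \<open>C*\<close> within distance \<open>r p\<close> of \<open>p\<close>. Choosing greedily, by increasing \<open>r\<close>, points whose balls
  \<open>B\<close> are pairwise disjoint gives at most \<open>k div l\<close> points, as each ball holds \<open>l\<close> points of \<open>C*\<close>;
  every ball meets a chosen ball of no larger radius, so the chosen points form a median
  solution of cost at most \<open>2 \<sigma>_opt\<close>. On the other hand, if \<open>q \<in> Q\<close> is nearest to \<open>p\<close>, then
  \<open>d_C(p,l) \<le> d(p,q) + d_P(q,l) \<le> 2 d(p,q) + d_P(p,l) \<le> 2 d_Q(p,1) + r p\<close>, since \<open>C\<close> contains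
  the \<open>l\<close> nearest neighbours of \<open>q\<close>. Summing, the cost of \<open>C\<close> is at most
  \<open>2 c \<sigma>_med + \<sigma>_opt \<le> (1 + 4 c) \<sigma>_opt\<close>.\<close>

lemma kdist_le:
  assumes "0 \<le> r" "i \<le> card {s\<in>S. dist p s \<le> r}"
  shows "kdist S p i \<le> r"
  unfolding kdist_def
  by (rule cInf_lower) (use assms in \<open>auto intro!: bdd_belowI[of _ 0]\<close>)

lemma kdist_one_le_dist:
  assumes "finite S" "t \<in> S"
  shows "kdist S p 1 \<le> dist p t"
proof (rule kdist_le)
  have "{s\<in>S. dist p s \<le> dist p t} \<noteq> {}" using assms(2) by blast
  then show "1 \<le> card {s\<in>S. dist p s \<le> dist p t}"
    using assms(1) by (simp add: Suc_le_eq card_gt_0_iff)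
qed simp

text \<open>Only the finitely many radii \<open>0\<close> and \<open>dist p s\<close> matter for the ball counts, which is why
  the infimum defining \<open>kdist\<close> is attained.\<close>
lemma ball_eq_at_candidate_radius:
  assumes "finite S" "0 \<le> r"
  obtains d where "d \<in> insert 0 (dist p ` S)" "0 \<le> d" "d \<le> r"
    "{s\<in>S. dist p s \<le> d} = {s\<in>S. dist p s \<le> r}"
proof -
  define D where "D = {d \<in> insert 0 (dist p ` S). d \<le> r}"
  have fin: "finite D" and "0 \<in> D" using assms by (auto simp: D_def)
  then have "Max D \<in> D" "0 \<le> Max D" by (auto intro: Max_in Max_ge)
  moreover have "dist p s \<le> Max D" if "s \<in> S" "dist p s \<le> r" for s
    using that fin by (intro Max_ge) (auto simp: D_def)
  ultimately show ?thesis
    by (intro that[of "Max D"]) (auto simp: D_def intro: order_trans)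
qed

lemma kdist_attained:
  assumes "finite S" "i \<le> card S"
  shows kdist_nonneg: "0 \<le> kdist S p i"
    and card_ball_kdist: "i \<le> card {s\<in>S. dist p s \<le> kdist S p i}"
proof -
  define R where "R = {r. 0 \<le> r \<and> i \<le> card {s\<in>S. dist p s \<le> r}}"
  define D where "D = insert 0 (dist p ` S)"
  have below: "\<exists>d\<in>D \<inter> R. d \<le> r" if "r \<in> R" for r
  proof -
    have r: "0 \<le> r" "i \<le> card {s\<in>S. dist p s \<le> r}" using that by (simp_all add: R_def)
    obtain d where d: "d \<in> D" "0 \<le> d" "d \<le> r" "{s\<in>S. dist p s \<le> d} = {s\<in>S. dist p s \<le> r}"
      using ball_eq_at_candidate_radius[OF assms(1) r(1), of p] unfolding D_def by blast
    then have "d \<in> R" using r(2) by (simp add: R_def)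
    then show ?thesis using d(1,3) by blast
  qed
  have "Max D \<in> R"
  proof -
    have "finite D" using assms(1) by (simp add: D_def)
    then have "{s\<in>S. dist p s \<le> Max D} = S" "0 \<le> Max D" by (auto simp: D_def intro!: Max_ge)
    then show ?thesis using assms(2) by (simp add: R_def)
  qed
  then have ne: "D \<inter> R \<noteq> {}" using below by blast
  have fin: "finite (D \<inter> R)" using assms(1) by (simp add: D_def)
  have "Min (D \<inter> R) \<in> R" using Min_in[OF fin ne] by simp
  moreover have "kdist S p i = Min (D \<inter> R)"
  proof (rule antisym)
    show "kdist S p i \<le> Min (D \<inter> R)"
      using \<open>Min (D \<inter> R) \<in> R\<close> unfolding R_def by (intro kdist_le) auto
    show "Min (D \<inter> R) \<le> kdist S p i"
      unfolding kdist_def R_def[symmetric]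
    proof (rule cInf_greatest)
      show "R \<noteq> {}" using ne by blast
    next
      fix r assume "r \<in> R"
      then obtain d where "d \<in> D \<inter> R" "d \<le> r" using below by blast
      then show "Min (D \<inter> R) \<le> r" using Min_le[OF fin] by fastforce
    qed
  qed
  ultimately show "0 \<le> kdist S p i" "i \<le> card {s\<in>S. dist p s \<le> kdist S p i}"
    by (simp_all add: R_def)
qed

lemma kdist_one_attained:
  assumes "finite S" "S \<noteq> {}"
  obtains q where "q \<in> S" "dist p q \<le> kdist S p 1"
proof -
  have "1 \<le> card S" using assms by (simp add: Suc_le_eq card_gt_0_iff)
  then have "{s\<in>S. dist p s \<le> kdist S p 1} \<noteq> {}"
    using card_ball_kdist[OF assms(1)] by (metis card.empty not_one_le_zero)
  then show ?thesis using that by blast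
qed

lemma kdist_antimono:
  assumes "finite T" "S \<subseteq> T" "i \<le> card S"
  shows "kdist T p i \<le> kdist S p i"
proof (rule kdist_le)
  have "finite S" using assms finite_subset by blast
  show "0 \<le> kdist S p i" using kdist_nonneg[OF \<open>finite S\<close> assms(3)] .
  have "card {s\<in>S. dist p s \<le> kdist S p i} \<le> card {s\<in>T. dist p s \<le> kdist S p i}"
    using assms by (intro card_mono) auto
  then show "i \<le> card {s\<in>T. dist p s \<le> kdist S p i}"
    using card_ball_kdist[OF \<open>finite S\<close> assms(3), of p] by linarith
qed

lemma kdist_triangle:
  assumes "finite S" "i \<le> card S"
  shows "kdist S q i \<le> dist q p + kdist S p i"
proof (rule kdist_le)
  show "0 \<le> dist q p + kdist S p i" using kdist_nonneg[OF assms] by simp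
  have "card {s\<in>S. dist p s \<le> kdist S p i} \<le> card {s\<in>S. dist q s \<le> dist q p + kdist S p i}"
    using assms(1) by (intro card_mono) (auto intro: order_trans[OF dist_triangle[of q _ p]])
  then show "i \<le> card {s\<in>S. dist q s \<le> dist q p + kdist S p i}"
    using card_ball_kdist[OF assms, of p] by linarith
qed

lemma nn_rank_bij:
  assumes "finite P" "inj_on ix P"
  shows "bij_betw (\<lambda>s. card {t\<in>P. nn_before ix q t s}) P {..<card P}"
proof -
  define f where "f s = card {t\<in>P. nn_before ix q t s}" for s
  have less: "f s < f s'" if "s \<in> P" "nn_before ix q s s'" for s s'
  proof -
    have "{t\<in>P. nn_before ix q t s} \<subset> {t\<in>P. nn_before ix q t s'}"
      using that by (auto simp: nn_before_def)
    then show ?thesis unfolding f_def using assms(1) by (intro psubset_card_mono) auto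
  qed
  have total: "nn_before ix q s s' \<or> nn_before ix q s' s"
    if "s \<in> P" "s' \<in> P" "s \<noteq> s'" for s s'
  proof -
    have "ix s \<noteq> ix s'" using assms(2) that by (auto dest: inj_onD)
    then show ?thesis unfolding nn_before_def by auto
  qed
  have inj: "inj_on f P"
    unfolding inj_on_def using less total by (metis less_irrefl)
  have "f s < card P" if "s \<in> P" for s
  proof -
    have "f s \<le> card (P - {s})"
      unfolding f_def using assms(1) by (intro card_mono) (auto simp: nn_before_def)
    also have "\<dots> < card P" using that assms(1) by (intro card_Diff1_less)
    finally show ?thesis .
  qed
  then have "f ` P \<subseteq> {..<card P}" by auto
  then have "f ` P = {..<card P}"
    using inj by (intro card_subset_eq) (auto simp: card_image)
  then show ?thesis using inj unfolding f_def bij_betw_def by blast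
qed

lemma card_nnset:
  assumes "finite P" "inj_on ix P" "l \<le> card P"
  shows "card (nnset ix P q l) = l"
proof -
  define f where "f s = card {t\<in>P. nn_before ix q t s}" for s
  have bij: "bij_betw f P {..<card P}" unfolding f_def using nn_rank_bij[OF assms(1,2)] .
  have "card (nnset ix P q l) = card {s\<in>P. f s < l}" by (simp add: nnset_def f_def)
  also have "\<dots> = card (f ` {s\<in>P. f s < l})"
    using bij by (intro card_image[symmetric]) (auto simp: bij_betw_def intro: inj_on_subset)
  also have "f ` {s\<in>P. f s < l} = {y \<in> f ` P. y < l}" by auto
  also have "\<dots> = {..<l}" using bij assms(3) by (auto simp: bij_betw_def)
  finally show ?thesis by simp
qed

lemma dist_le_kdist_if_in_nnset:
  assumes "finite P" "l \<le> card P" "s \<in> nnset ix P q l"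
  shows "dist q s \<le> kdist P q l"
proof (rule ccontr)
  assume "\<not> ?thesis"
  then have "{t\<in>P. dist q t \<le> kdist P q l} \<subseteq> {t\<in>P. nn_before ix q t s}"
    by (auto simp: nn_before_def)
  then have "card {t\<in>P. dist q t \<le> kdist P q l} \<le> card {t\<in>P. nn_before ix q t s}"
    using assms(1) by (intro card_mono) auto
  moreover have "card {t\<in>P. nn_before ix q t s} < l" using assms(3) by (simp add: nnset_def)
  ultimately show False using card_ball_kdist[OF assms(1,2), of q] by linarith
qed

lemma kdist_le_kdist_if_nnset_subset:
  assumes "finite P" "inj_on ix P" "l \<le> card P" "C \<subseteq> P" "nnset ix P q l \<subseteq> C"
  shows "kdist C q l \<le> kdist P q l"
proof (rule kdist_le)
  show "0 \<le> kdist P q l" using kdist_nonneg[OF assms(1,3)] .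
  have "finite C" using assms(1,4) finite_subset by blast
  then have "card (nnset ix P q l) \<le> card {s\<in>C. dist q s \<le> kdist P q l}"
    using assms(5) dist_le_kdist_if_in_nnset[OF assms(1,3)] by (intro card_mono) auto
  then show "l \<le> card {s\<in>C. dist q s \<le> kdist P q l}"
    using card_nnset[OF assms(1-3)] by simp
qed

lemma greedy_disjoint_cover:
  fixes r :: "'a \<Rightarrow> 'c::linorder" and B :: "'a \<Rightarrow> 'b set"
  assumes "finite A" "\<forall>p\<in>A. B p \<noteq> {}"
  shows "\<exists>T\<subseteq>A. disjoint_family_on B T \<and> (\<forall>p\<in>A. \<exists>t\<in>T. r t \<le> r p \<and> B t \<inter> B p \<noteq> {})"
  using assms
proof (induction "card A" arbitrary: A rule: less_induct)
  case less
  show ?case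
  proof (cases "A = {}")
    case False
    define a where "a = arg_min_on r A"
    have a: "a \<in> A" "\<And>p. p \<in> A \<Longrightarrow> r a \<le> r p"
      unfolding a_def using arg_min_if_finite(1) arg_min_least less.prems(1) False by metis+
    define A' where "A' = {p\<in>A. B p \<inter> B a = {}}"
    have "a \<notin> A'" using a(1) less.prems(2) by (auto simp: A'_def)
    then have sub: "A' \<subset> A" using a(1) by (auto simp: A'_def)
    then have "card A' < card A" using less.prems(1) by (simp add: psubset_card_mono)
    moreover have "finite A'" "\<forall>p\<in>A'. B p \<noteq> {}" using less.prems by (auto simp: A'_def)
    ultimately obtain T' where T': "T' \<subseteq> A'" "disjoint_family_on B T'"
      "\<forall>p\<in>A'. \<exists>t\<in>T'. r t \<le> r p \<and> B t \<inter> B p \<noteq> {}"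
      using less.hyps[of A'] by blast
    have "insert a T' \<subseteq> A" using T'(1) sub a(1) by blast
    moreover have "disjoint_family_on B (insert a T')"
      using T'(1,2) by (auto simp: A'_def disjoint_family_on_def)
    moreover have "\<exists>t\<in>insert a T'. r t \<le> r p \<and> B t \<inter> B p \<noteq> {}" if "p \<in> A" for p
    proof (cases "p \<in> A'")
      case True
      then show ?thesis using T'(3) by blast
    next
      case False
      then have "B a \<inter> B p \<noteq> {}" using that by (auto simp: A'_def)
      then show ?thesis using a(2) that by blast
    qed
    ultimately show ?thesis by blast
  qed (simp add: disjoint_family_on_def)
qed

lemma card_mult_le_card_Union:
  assumes "finite S" "disjoint_family_on B T" "\<forall>t\<in>T. B t \<subseteq> S \<and> l \<le> card (B t)"
  shows "card T * l \<le> card S"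
proof (cases "finite T")
  case True
  have "card T * l \<le> (\<Sum>t\<in>T. card (B t))"
    using assms(3) sum_mono[of T "\<lambda>_. l"] by simp
  also have "\<dots> = card (\<Union>t\<in>T. B t)"
    using True assms by (intro card_UN_disjoint[symmetric])
      (auto simp: disjoint_family_on_def intro: finite_subset[OF _ assms(1)])
  also have "\<dots> \<le> card S" using assms by (intro card_mono) auto
  finally show ?thesis .
qed simp

lemma median_solution_from_ftsolution:
  assumes "finite P" "Cs \<subseteq> P" "card Cs = k" "1 \<le> l" "l \<le> k"
  obtains S where "S \<subseteq> P" "card S = k div l" "ftcost P S 1 \<le> 2 * ftcost P Cs l"
proof -
  have fCs: "finite Cs" using assms(1,2) finite_subset by blast
  have lCs: "l \<le> card Cs" using assms(3,5) by simp
  define r where "r p = kdist Cs p l" for p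
  define B where "B p = {s\<in>Cs. dist p s \<le> r p}" for p
  have Bl: "l \<le> card (B p)" for p
    unfolding B_def r_def using card_ball_kdist[OF fCs lCs] .
  have "B p \<noteq> {}" for p using Bl[of p] assms(4) by auto
  then obtain T where T: "T \<subseteq> P" "disjoint_family_on B T"
    "\<forall>p\<in>P. \<exists>t\<in>T. r t \<le> r p \<and> B t \<inter> B p \<noteq> {}"
    using greedy_disjoint_cover[OF assms(1), of B r] by blast
  have "\<forall>t\<in>T. B t \<subseteq> Cs \<and> l \<le> card (B t)" using Bl by (simp add: B_def)
  then have "card T * l \<le> k" using card_mult_le_card_Union[OF fCs T(2)] assms(3) by simp
  then have "card T \<le> k div l" using assms(4) by (simp add: less_eq_div_iff_mult_less_eq)
  moreover have "k div l \<le> card P"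
    using card_mono[OF assms(1,2)] assms(3) div_le_dividend[of k l] by linarith
  ultimately obtain S where S: "T \<subseteq> S" "S \<subseteq> P" "card S = k div l"
    using exists_subset_between[OF _ _ T(1) assms(1)] by blast
  have "finite S" using S(2) assms(1) finite_subset by blast
  have "kdist S p 1 \<le> 2 * r p" if p: "p \<in> P" for p
  proof -
    obtain t where t: "t \<in> T" "r t \<le> r p" "B t \<inter> B p \<noteq> {}" using T(3) p by blast
    then obtain s where s: "s \<in> B t" "s \<in> B p" by blast
    have "kdist S p 1 \<le> dist p t" using S(1) t(1) by (intro kdist_one_le_dist[OF \<open>finite S\<close>]) blast
    also have "\<dots> \<le> dist p s + dist s t" by (rule dist_triangle)
    also have "\<dots> \<le> r p + r t" using s unfolding B_def by (simp add: dist_commute add_mono)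
    finally show ?thesis using t(2) by linarith
  qed
  then have "ftcost P S 1 \<le> 2 * ftcost P Cs l"
    unfolding ftcost_def r_def sum_distrib_left by (intro sum_mono) auto
  then show ?thesis using S that by blast
qed

lemma ftcost_le_via_nearest_neighbours:
  assumes "finite P" "inj_on ix P" "l \<le> card C" "Q \<subseteq> P" "Q \<noteq> {}"
    and "C \<subseteq> P" "(\<Union>q\<in>Q. nnset ix P q l) \<subseteq> C" "Cs \<subseteq> P" "l \<le> card Cs"
  shows "ftcost P C l \<le> 2 * ftcost P Q 1 + ftcost P Cs l"
proof -
  have fin: "finite Q" "finite C" using assms finite_subset by blast+
  have lP: "l \<le> card P" using assms(1,3,6) card_mono order_trans by blast
  have "kdist C p l \<le> 2 * kdist Q p 1 + kdist Cs p l" for p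
  proof -
    obtain q where q: "q \<in> Q" "dist p q \<le> kdist Q p 1"
      using kdist_one_attained[OF fin(1) assms(5)] by blast
    have "kdist C p l \<le> dist p q + kdist C q l" using kdist_triangle[OF fin(2) assms(3)] .
    also have "kdist C q l \<le> kdist P q l"
      using kdist_le_kdist_if_nnset_subset[OF assms(1,2) lP assms(6)] assms(7) q(1) by blast
    also have "kdist P q l \<le> dist q p + kdist P p l" using kdist_triangle[OF assms(1) lP] .
    also have "kdist P p l \<le> kdist Cs p l" using kdist_antimono[OF assms(1,8,9)] .
    finally show ?thesis using q(2) by (simp add: dist_commute)
  qed
  then show ?thesis unfolding ftcost_def sum_distrib_left sum.distrib[symmetric]
    by (intro sum_mono) auto
qed

theorem theorem1:
  fixes P Q C :: "'a::metric_space set" and ix :: "'a \<Rightarrow> nat"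
    and l k :: nat and c :: real
  assumes "finite P" and "inj_on ix P"
    and "1 \<le> l" and "l \<le> k" and "k \<le> card P"
    and "c \<ge> 1"
    and "Q \<subseteq> P" and "card Q = k div l"
    and "ftcost P Q 1 \<le> c * Min {ftcost P S 1 | S. S \<subseteq> P \<and> card S = k div l}"
    and "C \<subseteq> P" and "card C = k"
    and "(\<Union>q\<in>Q. nnset ix P q l) \<subseteq> C"
  shows "ftcost P C l \<le> (1 + 4 * c) * Min {ftcost P C' l | C'. C' \<subseteq> P \<and> card C' = k}"
proof -
  let ?F = "{ftcost P C' l | C'. C' \<subseteq> P \<and> card C' = k}"
  let ?G = "{ftcost P S 1 | S. S \<subseteq> P \<and> card S = k div l}"
  have finite_costs: "finite ?F" "finite ?G"
    using assms(1) by (simp_all add: setcompr_eq_image)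
  obtain C0 where "C0 \<subseteq> P" "card C0 = k" using obtain_subset_with_card_n[OF assms(5)] by metis
  then have "?F \<noteq> {}" by blast
  then obtain Cs where Cs: "Cs \<subseteq> P" "card Cs = k" "Min ?F = ftcost P Cs l"
    using Min_in[OF finite_costs(1)] by blast
  obtain S where S: "S \<subseteq> P" "card S = k div l" "ftcost P S 1 \<le> 2 * ftcost P Cs l"
    using median_solution_from_ftsolution[OF assms(1) Cs(1,2) assms(3,4)] .
  have "Min ?G \<le> ftcost P S 1" using S(1,2) by (intro Min_le[OF finite_costs(2)]) blast
  then have "Min ?G \<le> 2 * Min ?F" using S(3) Cs(3) by linarith
  then have Q_cost: "ftcost P Q 1 \<le> c * (2 * Min ?F)"
    using assms(6,9) mult_left_mono[of "Min ?G" "2 * Min ?F" c] by linarith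
  have "0 < card Q" using assms(3,4,8) by (simp add: div_greater_zero_iff)
  then have "ftcost P C l \<le> 2 * ftcost P Q 1 + Min ?F"
    using ftcost_le_via_nearest_neighbours[OF assms(1,2) _ assms(7) _ assms(10,12) Cs(1)]
      assms(4,11) Cs(2,3) by force
  with Q_cost show ?thesis by (simp add: algebra_simps)
qed

end
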